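(* Let $X$ be a space, $Y$ a metrizable space and $\kappa$ an infinite cardinal. (a) If $X$ is a strict compact-chain of length $\kappa$, then $\mathsf{L_{cl}}(X,Y)$ holds. (b) If $X$ is countably compact and is a strict chain of length $\kappa$ of open subsets each contained in some Lindelöf subset of $X$, then $\mathsf{BR}(X,Y)$ holds. (c) In particular, if $X$ is a countably compact Type I space, then both $\mathsf{BR_{cl}}(X,Y)$ and $\mathsf{L_{cl}}(X,Y)$ hold.
   Context: All spaces are Hausdorff and maps continuous. For a property $\mathcal P$, $X$ is a strict $\mathcal P$-chain of length $\kappa$ if $X=\bigcup_{\alpha<\kappa}H_\alpha$ with $H_\alpha\subsetneq H_\beta$ for $\alpha<\beta$ and each $H_\alpha$ having $\mathcal P$. A space $X$ is of Type I if $X=\bigcup_{\alpha<\omega_1}X_\alpha$ with $X_\alpha$ open, $\overline{X_\alpha}\subset X_\beta$ for $\alpha<\beta$, $\overline{X_\alpha}$ Lindelöf, and $X\neq X_\alpha$ for all $\alpha$. For a non-Lindelöf space $X$ and a space $Y$: $\mathsf{L}(X,Y)$ means that for every continuous $f:X\to Y$ there is a Lindelöf $Z\subset X$ with $f(Z)=f(X)$; $\mathsf{BR}(X,Y)$ means that for every continuous $f:X\to Y$ there is a Lindelöf $Z\subset X$ such that $f(X\setminus W)=f(X\setminus Z)$ for every Lindelöf $W\supseteq Z$. The subscript $\mathsf{cl}$ means that $Z$ can moreover be chosen closed. (For Lindelöf $X$ these properties are regarded as trivially true.) *)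

theory Defs
  imports "HOL-Analysis.Analysis"
begin

definition Lindelof_in :: "'a topology \<Rightarrow> 'a set \<Rightarrow> bool" where
  "Lindelof_in X Z \<longleftrightarrow> Z \<subseteq> topspace X \<and> Lindelof_space (subtopology X Z)"

definition countably_compact_space :: "'a topology \<Rightarrow> bool" where
  "countably_compact_space X \<longleftrightarrow>
     (\<forall>\<U>. countable \<U> \<and> (\<forall>U\<in>\<U>. openin X U) \<and> topspace X \<subseteq> \<Union>\<U>
          \<longrightarrow> (\<exists>\<V>. finite \<V> \<and> \<V> \<subseteq> \<U> \<and> topspace X \<subseteq> \<Union>\<V>))"

text \<open>X is a strict P-chain of length kappa, where kappa is given as a cardinal
  order relation r (indices = Field r, alpha < beta iff (alpha,beta) in r and alpha ~= beta).\<close>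
definition strict_chain :: "'i rel \<Rightarrow> 'a topology \<Rightarrow> ('a set \<Rightarrow> bool) \<Rightarrow> bool" where
  "strict_chain r X P \<longleftrightarrow>
     (\<exists>H :: 'i \<Rightarrow> 'a set.
        topspace X = (\<Union>\<alpha>\<in>Field r. H \<alpha>) \<and>
        (\<forall>\<alpha>\<in>Field r. \<forall>\<beta>\<in>Field r. (\<alpha>, \<beta>) \<in> r \<and> \<alpha> \<noteq> \<beta> \<longrightarrow> H \<alpha> \<subset> H \<beta>) \<and>
        (\<forall>\<alpha>\<in>Field r. P (H \<alpha>)))"

text \<open>Type I spaces; omega_1 is represented by the successor cardinal of natLeq.\<close>
definition type_I_space :: "'a topology \<Rightarrow> bool" where
  "type_I_space X \<longleftrightarrow>
     (\<exists>XX :: nat set \<Rightarrow> 'a set.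
        topspace X = (\<Union>\<alpha>\<in>Field (cardSuc natLeq). XX \<alpha>) \<and>
        (\<forall>\<alpha>\<in>Field (cardSuc natLeq). openin X (XX \<alpha>) \<and>
              Lindelof_in X (X closure_of (XX \<alpha>)) \<and> topspace X \<noteq> XX \<alpha>) \<and>
        (\<forall>\<alpha>\<in>Field (cardSuc natLeq). \<forall>\<beta>\<in>Field (cardSuc natLeq).
            (\<alpha>, \<beta>) \<in> cardSuc natLeq \<and> \<alpha> \<noteq> \<beta> \<longrightarrow> X closure_of (XX \<alpha>) \<subseteq> XX \<beta>))"

definition L_prop :: "'a topology \<Rightarrow> 'b topology \<Rightarrow> bool" where
  "L_prop X Y \<longleftrightarrow> Lindelof_space X \<or>
     (\<forall>f. continuous_map X Y f \<longrightarrow>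
        (\<exists>Z. Lindelof_in X Z \<and> f ` Z = f ` topspace X))"

definition L_cl_prop :: "'a topology \<Rightarrow> 'b topology \<Rightarrow> bool" where
  "L_cl_prop X Y \<longleftrightarrow> Lindelof_space X \<or>
     (\<forall>f. continuous_map X Y f \<longrightarrow>
        (\<exists>Z. Lindelof_in X Z \<and> closedin X Z \<and> f ` Z = f ` topspace X))"

definition BR_prop :: "'a topology \<Rightarrow> 'b topology \<Rightarrow> bool" where
  "BR_prop X Y \<longleftrightarrow> Lindelof_space X \<or>
     (\<forall>f. continuous_map X Y f \<longrightarrow>
        (\<exists>Z. Lindelof_in X Z \<and>
           (\<forall>W. Lindelof_in X W \<and> Z \<subseteq> W \<longrightarrow>
               f ` (topspace X - W) = f ` (topspace X - Z))))"

definition BR_cl_prop :: "'a topology \<Rightarrow> 'b topology \<Rightarrow> bool" where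
  "BR_cl_prop X Y \<longleftrightarrow> Lindelof_space X \<or>
     (\<forall>f. continuous_map X Y f \<longrightarrow>
        (\<exists>Z. Lindelof_in X Z \<and> closedin X Z \<and>
           (\<forall>W. Lindelof_in X W \<and> Z \<subseteq> W \<longrightarrow>
               f ` (topspace X - W) = f ` (topspace X - Z))))"

end

theory Submission
  imports Defs
begin

text \<open>
  Call a family of sets countably directed if every countable subfamily has an upper bound in
  the family. A strict chain indexed by a cardinal is either countably directed, or it is
  exhausted by countably many of its members, in which case X is Lindelof and there is
  nothing to prove.

  For a countably directed chain the argument happens in Y. If f(X) is compact, it is a compact
  metrizable space, hence second countable. For (a) and the L-part of (c), the images f(K) of the
  members K of a countably directed cover of X are compact, hence closed; a countable dense
  subset of f(X) lies in a single f(K), so f(K) = f(X). For the BR-parts, the relatively open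
  sets f(X) - f(X - G) indexed by the open members G of the chain form a countably directed
  family in a hereditarily Lindelof space, so one of them is largest; and every Lindelof W
  is contained in a single member G. Compactness of f(X) and of the images of closed sets comes
  from countable compactness of X (countably compact subsets of metrizable spaces are compact),
  and in (a) from the compact members of the chain: every countable subset of f(X) already lies
  in one compact image.
\<close>

section \<open>Countable compactness and compact subsets of metrizable spaces\<close>

definition countably_compactin :: "'a topology \<Rightarrow> 'a set \<Rightarrow> bool" where
  "countably_compactin X S \<longleftrightarrow> S \<subseteq> topspace X \<and>
     (\<forall>\<U>. countable \<U> \<and> (\<forall>U\<in>\<U>. openin X U) \<and> S \<subseteq> \<Union>\<U>
          \<longrightarrow> (\<exists>\<V>. finite \<V> \<and> \<V> \<subseteq> \<U> \<and> S \<subseteq> \<Union>\<V>))"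

lemma closedin_countably_compactin:
  assumes "countably_compact_space X" "closedin X C"
  shows "countably_compactin X C"
  unfolding countably_compactin_def
proof (intro conjI allI impI)
  show "C \<subseteq> topspace X" using assms(2) by (rule closedin_subset)
  fix \<U> assume \<U>: "countable \<U> \<and> (\<forall>U\<in>\<U>. openin X U) \<and> C \<subseteq> \<Union>\<U>"
  let ?\<W> = "insert (topspace X - C) \<U>"
  have "countable ?\<W>" "\<forall>U\<in>?\<W>. openin X U" "topspace X \<subseteq> \<Union>?\<W>"
    using \<U> assms(2) by auto
  then obtain \<V> where \<V>: "finite \<V>" "\<V> \<subseteq> ?\<W>" "topspace X \<subseteq> \<Union>\<V>"
    using assms(1) unfolding countably_compact_space_def by meson
  then show "\<exists>\<V>. finite \<V> \<and> \<V> \<subseteq> \<U> \<and> C \<subseteq> \<Union>\<V>"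
    using \<open>C \<subseteq> topspace X\<close> by (intro exI[of _ "\<V> - {topspace X - C}"]) auto
qed

lemma image_countably_compactin:
  assumes S: "countably_compactin X S" and f: "continuous_map X Y f"
  shows "countably_compactin Y (f ` S)"
  unfolding countably_compactin_def
proof (intro conjI allI impI)
  have "S \<subseteq> topspace X" using S by (simp add: countably_compactin_def)
  then show "f ` S \<subseteq> topspace Y" using f continuous_map_image_subset_topspace by blast
  fix \<U> assume \<U>: "countable \<U> \<and> (\<forall>U\<in>\<U>. openin Y U) \<and> f ` S \<subseteq> \<Union>\<U>"
  define pre where "pre U = {x \<in> topspace X. f x \<in> U}" for U
  have "countable (pre ` \<U>)" "\<forall>V\<in>pre ` \<U>. openin X V"
    using \<U> f by (auto simp: pre_def openin_continuous_map_preimage)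
  moreover have "S \<subseteq> \<Union>(pre ` \<U>)"
    using \<U> \<open>S \<subseteq> topspace X\<close> by (fastforce simp: pre_def)
  ultimately
  obtain \<V>' where "finite \<V>'" "\<V>' \<subseteq> pre ` \<U>" "S \<subseteq> \<Union>\<V>'"
    using S unfolding countably_compactin_def by meson
  then obtain \<V> where "finite \<V>" "\<V> \<subseteq> \<U>" "S \<subseteq> \<Union>(pre ` \<V>)"
    by (metis finite_subset_image)
  then show "\<exists>\<V>. finite \<V> \<and> \<V> \<subseteq> \<U> \<and> f ` S \<subseteq> \<Union>\<V>"
    by (intro exI[of _ \<V>]) (fastforce simp: pre_def)
qed

lemma countably_compactin_imp_Bolzano_Weierstrass:
  assumes S: "countably_compactin Y S" and T: "T \<subseteq> S" "infinite T"
  shows "S \<inter> Y derived_set_of T \<noteq> {}"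
proof
  \<comment> \<open>Otherwise the complements of the closures of the tails of a sequence in T form a
    countable open cover of S without finite subcover.\<close>
  assume no_limit: "S \<inter> Y derived_set_of T = {}"
  obtain \<sigma> :: "nat \<Rightarrow> _" where \<sigma>: "inj \<sigma>" "range \<sigma> \<subseteq> T"
    using infinite_countable_subset T(2) by meson
  define tail where "tail n = \<sigma> ` {n..}" for n
  define U where "U n = topspace Y - Y closure_of tail n" for n
  have tail_closed: "s \<in> tail n" if "s \<in> Y closure_of tail n" "s \<in> S" for s n
  proof -
    have "Y derived_set_of tail n \<subseteq> Y derived_set_of T"
      using \<sigma> by (intro derived_set_of_mono) (auto simp: tail_def)
    then show ?thesis using closure_of[of Y "tail n"] no_limit that by auto
  qed
  have "S \<subseteq> \<Union>(range U)"
  proof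
    fix s assume "s \<in> S"
    then have "s \<in> topspace Y" using S by (auto simp: countably_compactin_def)
    obtain n where "s \<notin> tail n"
    proof (cases "s \<in> range \<sigma>")
      case True
      then obtain m where "s = \<sigma> m" by auto
      then have "s \<notin> tail (Suc m)" using \<sigma>(1) by (auto simp: tail_def inj_eq)
      then show ?thesis using that by blast
    qed (use that in \<open>auto simp: tail_def\<close>)
    then show "s \<in> \<Union>(range U)"
      using tail_closed \<open>s \<in> S\<close> \<open>s \<in> topspace Y\<close> by (auto simp: U_def)
  qed
  moreover have "countable (range U)" "\<forall>V\<in>range U. openin Y V" by (auto simp: U_def)
  ultimately obtain \<V> where "finite \<V>" "\<V> \<subseteq> range U" "S \<subseteq> \<Union>\<V>"
    using S unfolding countably_compactin_def by meson
  then obtain N where N: "finite N" "S \<subseteq> (\<Union>n\<in>N. U n)"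
    by (metis finite_subset_image)
  define m where "m = Suc (Max (insert 0 N))"
  have "\<sigma> m \<in> S" using \<sigma> T by auto
  then obtain k where k: "k \<in> N" "\<sigma> m \<in> U k" using N by auto
  then have "\<sigma> m \<in> tail k" using N(1) by (auto simp: tail_def m_def le_SucI)
  moreover have "tail k \<subseteq> topspace Y"
    using \<sigma> T S by (auto simp: tail_def countably_compactin_def)
  ultimately show False using k closure_of_subset by (fastforce simp: U_def)
qed

lemma metrizable_compactin_Bolzano_Weierstrass:
  assumes "metrizable_space Y" "S \<subseteq> topspace Y"
    and "\<And>T. T \<subseteq> S \<Longrightarrow> infinite T \<Longrightarrow> S \<inter> Y derived_set_of T \<noteq> {}"
  shows "compactin Y S"
proof -
  obtain M d where M: "Metric_space M d" and Y: "Y = Metric_space.mtopology M d"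
    using assms(1) by (auto simp: metrizable_space_def)
  then show ?thesis
    using Metric_space.compactin_eq_Bolzano_Weierstrass[OF M, of S]
      Metric_space.topspace_mtopology[OF M] assms by auto
qed

lemma metrizable_countably_compactin_imp_compactin:
  "metrizable_space Y \<Longrightarrow> countably_compactin Y S \<Longrightarrow> compactin Y S"
  by (meson countably_compactin_def countably_compactin_imp_Bolzano_Weierstrass
      metrizable_compactin_Bolzano_Weierstrass)

lemma countably_compact_space_closedin_image_compactin:
  assumes "countably_compact_space X" "closedin X C" "continuous_map X Y f" "metrizable_space Y"
  shows "compactin Y (f ` C)"
  using assms
  by (meson closedin_countably_compactin image_countably_compactin
      metrizable_countably_compactin_imp_compactin)

lemma metrizable_compact_space_imp_second_countable:
  assumes "metrizable_space X" "compact_space X"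
  shows "second_countable X"
proof -
  obtain M d where M: "Metric_space M d" and X: "X = Metric_space.mtopology M d"
    using assms(1) by (auto simp: metrizable_space_def)
  interpret Metric_space M d by (rule M)
  have "mtotally_bounded M"
    using assms(2) compactin_imp_mtotally_bounded by (simp add: X compact_space_def)
  then have "\<forall>n::nat. \<exists>N. finite N \<and> N \<subseteq> M \<and> M \<subseteq> (\<Union>x\<in>N. mball x (inverse (Suc n)))"
    unfolding mtotally_bounded_def by simp
  then obtain N where N: "\<And>n. finite (N n) \<and> N n \<subseteq> M \<and> M \<subseteq> (\<Union>x\<in>N n. mball x (inverse (Suc n)))"
    by metis
  show ?thesis
    unfolding second_countable_def
  proof (intro exI conjI allI impI ballI)
    show "countable (\<Union>n. (\<lambda>x. mball x (inverse (Suc n))) ` N n)"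
      using N by (intro countable_UN) (auto intro: countable_finite)
    show "openin X B" if "B \<in> (\<Union>n. (\<lambda>x. mball x (inverse (Suc n))) ` N n)" for B
      using that by (auto simp: X)
    fix U y assume "openin X U \<and> y \<in> U"
    then obtain \<epsilon> where \<epsilon>: "\<epsilon> > 0" "mball y \<epsilon> \<subseteq> U" and "y \<in> M"
      unfolding X openin_mtopology by blast
    obtain n where n: "inverse (real (Suc n)) < \<epsilon>/2"
      using reals_Archimedean \<open>\<epsilon> > 0\<close> by (metis half_gt_zero)
    obtain x where x: "x \<in> N n" "y \<in> mball x (inverse (Suc n))"
      using N[of n] \<open>y \<in> M\<close> by auto
    have "mball x (inverse (Suc n)) \<subseteq> mball y \<epsilon>"
    proof
      fix z assume z: "z \<in> mball x (inverse (Suc n))"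
      have "d y z \<le> d x y + d x z" using x z by (metis in_mball triangle commute)
      also have "\<dots> < \<epsilon>" using x z n by auto
      finally show "z \<in> mball y \<epsilon>" using x z by auto
    qed
    then show "\<exists>B\<in>(\<Union>n. (\<lambda>x. mball x (inverse (Suc n))) ` N n). y \<in> B \<and> B \<subseteq> U"
      using x \<epsilon> by blast
  qed
qed

lemma metrizable_compactin_imp_second_countable:
  "metrizable_space Y \<Longrightarrow> compactin Y K \<Longrightarrow> second_countable (subtopology Y K)"
  by (simp add: compact_space_subtopology metrizable_compact_space_imp_second_countable
      metrizable_space_subtopology)

section \<open>Countably directed families\<close>

definition countably_directed :: "'i set \<Rightarrow> ('i \<Rightarrow> 'a set) \<Rightarrow> bool" where
  "countably_directed I H \<longleftrightarrow> (\<forall>J\<subseteq>I. countable J \<longrightarrow> (\<exists>\<delta>\<in>I. \<forall>\<alpha>\<in>J. H \<alpha> \<subseteq> H \<delta>))"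

lemma countably_directedD:
  "countably_directed I H \<Longrightarrow> J \<subseteq> I \<Longrightarrow> countable J \<Longrightarrow> \<exists>\<delta>\<in>I. \<forall>\<alpha>\<in>J. H \<alpha> \<subseteq> H \<delta>"
  unfolding countably_directed_def by simp

lemma countably_directed_mono_comp:
  assumes "countably_directed I H" "mono g"
  shows "countably_directed I (\<lambda>\<alpha>. g (H \<alpha>))"
  using assms unfolding countably_directed_def mono_def by meson

lemma metrizable_compactin_countably_directed_Union:
  assumes Y: "metrizable_space Y" and K: "\<And>\<alpha>. \<alpha> \<in> I \<Longrightarrow> compactin Y (K \<alpha>)"
    "countably_directed I K"
  shows "compactin Y (\<Union>\<alpha>\<in>I. K \<alpha>)"
proof (rule metrizable_compactin_Bolzano_Weierstrass[OF Y])
  show "(\<Union>\<alpha>\<in>I. K \<alpha>) \<subseteq> topspace Y" using K(1) compactin_subset_topspace by blast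
  fix T assume T: "T \<subseteq> (\<Union>\<alpha>\<in>I. K \<alpha>)" "infinite T"
  obtain T' where T': "T' \<subseteq> T" "countable T'" "infinite T'"
    using T(2) infinite_countable_subset' by blast
  have "\<forall>t\<in>T'. \<exists>\<alpha>. \<alpha> \<in> I \<and> t \<in> K \<alpha>" using T(1) T'(1) by blast
  from bchoice[OF this] obtain a where a: "\<forall>t\<in>T'. a t \<in> I \<and> t \<in> K (a t)" ..
  then have "a ` T' \<subseteq> I" "countable (a ` T')" using T'(2) by auto
  then obtain \<delta> where \<delta>: "\<delta> \<in> I" "\<forall>\<alpha>\<in>a ` T'. K \<alpha> \<subseteq> K \<delta>"
    using countably_directedD[OF K(2)] by blast
  have "T' \<subseteq> K \<delta>" using a \<delta>(2) by blast
  then obtain y where "y \<in> K \<delta>" "y \<in> Y derived_set_of T'"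
    using compactin_imp_Bolzano_Weierstrass K(1)[OF \<delta>(1)] T'(3) by blast
  moreover have "Y derived_set_of T' \<subseteq> Y derived_set_of T"
    using T'(1) by (rule derived_set_of_mono)
  ultimately show "(\<Union>\<alpha>\<in>I. K \<alpha>) \<inter> Y derived_set_of T \<noteq> {}" using \<delta>(1) by blast
qed

lemma Lindelof_subset_countably_directed:
  assumes W: "Lindelof_space (subtopology X W)" "W \<subseteq> (\<Union>\<alpha>\<in>I. U \<alpha>)"
    and U: "\<And>\<alpha>. \<alpha> \<in> I \<Longrightarrow> openin X (U \<alpha>)" "countably_directed I U"
  shows "\<exists>\<delta>\<in>I. W \<subseteq> U \<delta>"
proof -
  have "W \<subseteq> topspace X" using W(2) U(1) openin_subset by blast
  have Lindelof: "\<forall>\<U>. (\<forall>V\<in>\<U>. openin X V) \<and> W \<subseteq> \<Union>\<U> \<longrightarrow> (\<exists>\<V>. countable \<V> \<and> \<V> \<subseteq> \<U> \<and> W \<subseteq> \<Union>\<V>)"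
    using W(1) unfolding Lindelof_space_subtopology_subset[OF \<open>W \<subseteq> topspace X\<close>] .
  have "(\<forall>V\<in>U ` I. openin X V) \<and> W \<subseteq> \<Union>(U ` I)" using U(1) W(2) by auto
  then obtain \<V> where "countable \<V>" "\<V> \<subseteq> U ` I" "W \<subseteq> \<Union>\<V>"
    using Lindelof[rule_format, of "U ` I"] by blast
  moreover obtain J where "countable J" "J \<subseteq> I" "\<V> = U ` J"
    using countable_subset_image \<open>countable \<V>\<close> \<open>\<V> \<subseteq> U ` I\<close> by meson
  ultimately have J: "countable J" "J \<subseteq> I" "W \<subseteq> (\<Union>\<alpha>\<in>J. U \<alpha>)" by auto
  then obtain \<delta> where "\<delta> \<in> I" "\<forall>\<alpha>\<in>J. U \<alpha> \<subseteq> U \<delta>"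
    using countably_directedD[OF U(2)] by blast
  with J(3) show ?thesis by blast
qed

lemma separable_closed_cover_countably_directed:
  assumes S: "separable_space (subtopology Y S)" "S = (\<Union>\<alpha>\<in>I. F \<alpha>)"
    and F: "\<And>\<alpha>. \<alpha> \<in> I \<Longrightarrow> closedin Y (F \<alpha>)" "countably_directed I F"
  shows "\<exists>\<delta>\<in>I. F \<delta> = S"
proof -
  have "S \<subseteq> topspace Y" using S(2) F(1) closedin_subset by fastforce
  then obtain D where D: "countable D" "D \<subseteq> S" "subtopology Y S closure_of D = S"
    using S(1) by (auto simp: separable_space_def Int_absorb1)
  have "\<forall>x\<in>D. \<exists>\<alpha>. \<alpha> \<in> I \<and> x \<in> F \<alpha>" using D(2) S(2) by blast
  from bchoice[OF this] obtain a where a: "\<forall>x\<in>D. a x \<in> I \<and> x \<in> F (a x)" ..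
  then have "a ` D \<subseteq> I" "countable (a ` D)" using D(1) by auto
  then obtain \<delta> where \<delta>: "\<delta> \<in> I" "\<forall>\<alpha>\<in>a ` D. F \<alpha> \<subseteq> F \<delta>"
    using countably_directedD[OF F(2)] by blast
  have "D \<subseteq> F \<delta>" using a \<delta>(2) by blast
  moreover have "closedin (subtopology Y S) (F \<delta>)"
    using F(1)[OF \<delta>(1)] S(2) \<delta>(1) by (intro closedin_subset_topspace) auto
  ultimately have "subtopology Y S closure_of D \<subseteq> F \<delta>" by (rule closure_of_minimal)
  then have "S \<subseteq> F \<delta>" using D(3) by simp
  then show ?thesis using \<delta>(1) S(2) by blast
qed

lemma countably_directed_cover_image_attained:
  assumes Y: "Hausdorff_space Y" "metrizable_space Y" and fX: "compactin Y (f ` topspace X)"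
    and K: "topspace X = (\<Union>\<alpha>\<in>I. K \<alpha>)" "\<And>\<alpha>. \<alpha> \<in> I \<Longrightarrow> compactin Y (f ` K \<alpha>)"
      "countably_directed I K"
  shows "\<exists>\<beta>\<in>I. f ` K \<beta> = f ` topspace X"
proof (rule separable_closed_cover_countably_directed)
  show "separable_space (subtopology Y (f ` topspace X))"
    using Y(2) fX by (simp add: metrizable_compactin_imp_second_countable
        second_countable_imp_separable_space)
  show "f ` topspace X = (\<Union>\<alpha>\<in>I. f ` K \<alpha>)" using K(1) by blast
  show "closedin Y (f ` K \<alpha>)" if "\<alpha> \<in> I" for \<alpha>
    using Y(1) K(2)[OF that] by (rule compactin_imp_closedin)
  show "countably_directed I (\<lambda>\<alpha>. f ` K \<alpha>)"
    using K(3) by (rule countably_directed_mono_comp) (simp add: mono_def image_mono)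
qed

lemma countably_directed_complement_images_least:
  assumes Y: "Hausdorff_space Y" "metrizable_space Y" and fX: "compactin Y (f ` topspace X)"
    and G: "\<And>\<alpha>. \<alpha> \<in> I \<Longrightarrow> compactin Y (f ` (topspace X - G \<alpha>))" "countably_directed I G"
  shows "\<exists>\<beta>\<in>I. \<forall>\<alpha>\<in>I. f ` (topspace X - G \<beta>) \<subseteq> f ` (topspace X - G \<alpha>)"
proof -
  define S where "S = f ` topspace X"
  define U where "U \<alpha> = S - f ` (topspace X - G \<alpha>)" for \<alpha>
  have "S \<subseteq> topspace Y" using fX compactin_subset_topspace S_def by blast
  have U_open: "openin (subtopology Y S) (U \<alpha>)" if "\<alpha> \<in> I" for \<alpha>
  proof -
    have "openin Y (topspace Y - f ` (topspace X - G \<alpha>))"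
      using compactin_imp_closedin[OF Y(1) G(1)[OF that]] by blast
    moreover have "U \<alpha> = S \<inter> (topspace Y - f ` (topspace X - G \<alpha>))"
      using \<open>S \<subseteq> topspace Y\<close> by (auto simp: U_def)
    ultimately show ?thesis by (simp add: openin_subtopology_Int2)
  qed
  have "second_countable (subtopology Y S)"
    using Y(2) fX by (simp add: S_def metrizable_compactin_imp_second_countable)
  then have "Lindelof_space (subtopology (subtopology Y S) (\<Union>\<alpha>\<in>I. U \<alpha>))"
    by (simp add: second_countable_imp_Lindelof_space second_countable_subtopology)
  moreover have "countably_directed I U"
    using G(2) unfolding U_def by (rule countably_directed_mono_comp) (auto simp: mono_def)
  ultimately obtain \<beta> where \<beta>: "\<beta> \<in> I" "(\<Union>\<alpha>\<in>I. U \<alpha>) \<subseteq> U \<beta>"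
    using Lindelof_subset_countably_directed[where X="subtopology Y S" and I=I and U=U] U_open
    by blast
  have "f ` (topspace X - G \<beta>) \<subseteq> f ` (topspace X - G \<alpha>)" if "\<alpha> \<in> I" for \<alpha>
    using \<beta>(2) that unfolding U_def S_def by blast
  then show ?thesis using \<beta>(1) by blast
qed

lemma BR_witness_countably_directed_open_cover:
  assumes Y: "Hausdorff_space Y" "metrizable_space Y"
    and X: "countably_compact_space X" and f: "continuous_map X Y f"
    and G: "topspace X = (\<Union>\<alpha>\<in>I. G \<alpha>)" "\<And>\<alpha>. \<alpha> \<in> I \<Longrightarrow> openin X (G \<alpha>)"
      "countably_directed I G"
  shows "\<exists>\<beta>\<in>I. \<forall>Z W. G \<beta> \<subseteq> Z \<and> Z \<subseteq> W \<and> Lindelof_in X W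
            \<longrightarrow> f ` (topspace X - W) = f ` (topspace X - Z)"
proof -
  have "compactin Y (f ` topspace X)"
    using countably_compact_space_closedin_image_compactin X closedin_topspace f Y(2) by blast
  moreover have "compactin Y (f ` (topspace X - G \<alpha>))" if "\<alpha> \<in> I" for \<alpha>
    using countably_compact_space_closedin_image_compactin X G(2)[OF that] f Y(2) by blast
  ultimately have "\<exists>\<beta>\<in>I. \<forall>\<alpha>\<in>I. f ` (topspace X - G \<beta>) \<subseteq> f ` (topspace X - G \<alpha>)"
    using G(3) by (rule countably_directed_complement_images_least[OF Y])
  then obtain \<beta> where \<beta>: "\<beta> \<in> I"
    "\<And>\<alpha>. \<alpha> \<in> I \<Longrightarrow> f ` (topspace X - G \<beta>) \<subseteq> f ` (topspace X - G \<alpha>)"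
    by blast
  have stable: "f ` (topspace X - W) = f ` (topspace X - Z)"
    if Z: "G \<beta> \<subseteq> Z" "Z \<subseteq> W" and W: "Lindelof_in X W" for Z W
  proof
    show "f ` (topspace X - W) \<subseteq> f ` (topspace X - Z)" using Z(2) by blast
    have "Lindelof_space (subtopology X W)" "W \<subseteq> (\<Union>\<alpha>\<in>I. G \<alpha>)"
      using W G(1) by (auto simp: Lindelof_in_def)
    then obtain \<delta> where "\<delta> \<in> I" "W \<subseteq> G \<delta>"
      using Lindelof_subset_countably_directed[OF _ _ G(2) G(3)] by blast
    then have "f ` (topspace X - G \<beta>) \<subseteq> f ` (topspace X - W)" using \<beta>(2) by blast
    then show "f ` (topspace X - Z) \<subseteq> f ` (topspace X - W)" using Z(1) by blast
  qed
  then show ?thesis using \<beta>(1) by blast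
qed

section \<open>Strict chains and Type I spaces\<close>

lemma compactin_imp_Lindelof_in: "compactin X K \<Longrightarrow> Lindelof_in X K"
  by (simp add: Lindelof_in_def compactin_subset_topspace compact_imp_Lindelof_space
      compact_space_subtopology)

lemma Lindelof_space_countable_Union_Lindelof_in:
  assumes "countable \<L>" "\<And>L. L \<in> \<L> \<Longrightarrow> Lindelof_in X L" "topspace X \<subseteq> \<Union>\<L>"
  shows "Lindelof_space X"
proof -
  have "\<Union>\<L> = topspace X" using assms(2,3) by (auto simp: Lindelof_in_def)
  moreover have "Lindelof_space (subtopology X (\<Union>\<L>))"
    using assms(2) by (intro Lindelof_space_Union[OF assms(1)]) (simp add: Lindelof_in_def)
  ultimately show ?thesis by (simp add: subtopology_topspace)
qed

lemma strict_chain_cases: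
  assumes r: "Card_order r" and chain: "strict_chain r X P"
  obtains (directed) H where "topspace X = (\<Union>\<alpha>\<in>Field r. H \<alpha>)"
      "\<And>\<alpha>. \<alpha> \<in> Field r \<Longrightarrow> P (H \<alpha>)" "countably_directed (Field r) H"
    | (countable) \<H> where "countable \<H>" "\<And>H. H \<in> \<H> \<Longrightarrow> P H" "topspace X = \<Union>\<H>"
proof -
  obtain H where H: "topspace X = (\<Union>\<alpha>\<in>Field r. H \<alpha>)" "\<forall>\<alpha>\<in>Field r. P (H \<alpha>)"
    and strict: "\<forall>\<alpha>\<in>Field r. \<forall>\<beta>\<in>Field r. (\<alpha>, \<beta>) \<in> r \<and> \<alpha> \<noteq> \<beta> \<longrightarrow> H \<alpha> \<subset> H \<beta>"
    using chain unfolding strict_chain_def by blast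
  show ?thesis
  proof (cases "countably_directed (Field r) H")
    case True
    show ?thesis by (rule directed[OF H(1) _ True]) (use H(2) in blast)
  next
    case False
    then obtain J where J: "J \<subseteq> Field r" "countable J"
      and unbounded: "\<forall>\<delta>\<in>Field r. \<exists>\<alpha>\<in>J. \<not> H \<alpha> \<subseteq> H \<delta>"
      unfolding countably_directed_def by auto
    have total: "(\<alpha>, \<beta>) \<in> r \<or> (\<beta>, \<alpha>) \<in> r" if "\<alpha> \<in> Field r" "\<beta> \<in> Field r" "\<alpha> \<noteq> \<beta>" for \<alpha> \<beta>
      using r that
      unfolding card_order_on_def well_order_on_def linear_order_on_def total_on_def by blast
    have "topspace X \<subseteq> (\<Union>\<alpha>\<in>J. H \<alpha>)"
    proof
      fix x assume "x \<in> topspace X"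
      then obtain \<gamma> where \<gamma>: "\<gamma> \<in> Field r" "x \<in> H \<gamma>" using H(1) by blast
      then obtain \<alpha> where \<alpha>: "\<alpha> \<in> J" "\<not> H \<alpha> \<subseteq> H \<gamma>" using unbounded by blast
      then have "\<alpha> \<noteq> \<gamma>" "\<not> ((\<alpha>, \<gamma>) \<in> r)" using strict \<gamma>(1) J(1) by auto
      then have "(\<gamma>, \<alpha>) \<in> r" using total \<gamma>(1) \<alpha>(1) J(1) by blast
      then have "H \<gamma> \<subseteq> H \<alpha>" using strict \<gamma>(1) \<alpha>(1) J(1) \<open>\<alpha> \<noteq> \<gamma>\<close> by blast
      then show "x \<in> (\<Union>\<alpha>\<in>J. H \<alpha>)" using \<gamma>(2) \<alpha>(1) by blast
    qed
    then have "topspace X = \<Union>(H ` J)" using H(1) J(1) by auto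
    show ?thesis by (rule countable[of "H ` J"]) (use J H(2) \<open>topspace X = \<Union>(H ` J)\<close> in auto)
  qed
qed

lemma cardSuc_natLeq_countable_strict_bound:
  assumes "S \<subseteq> Field (cardSuc natLeq)" "countable S"
  shows "\<exists>\<delta>\<in>Field (cardSuc natLeq). \<forall>\<alpha>\<in>S. (\<alpha>, \<delta>) \<in> cardSuc natLeq \<and> \<alpha> \<noteq> \<delta>"
proof -
  \<comment> \<open>S lies below some i by regularity of the successor cardinal (cardSuc_UNION);
    any b above i is a strict bound, as the well-order has no largest element.\<close>
  let ?r = "cardSuc natLeq"
  have Cr: "Card_order ?r" by (simp add: cardSuc_Card_order natLeq_Card_order)
  have inf: "\<not> finite (Field ?r)" using cardSuc_finite[OF natLeq_Card_order] Field_natLeq by auto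
  have wo: "well_order_on (Field ?r) ?r" using Cr card_order_on_well_order_on by blast
  have tr: "trans ?r" and an: "antisym ?r" and rf: "refl_on (Field ?r) ?r"
    using wo unfolding well_order_on_def linear_order_on_def partial_order_on_def preorder_on_def
    by auto
  have chain: "relChain ?r (under ?r)" unfolding relChain_def under_def
    using tr by (auto elim: transE)
  have "S \<subseteq> (\<Union>i\<in>Field ?r. under ?r i)" using assms(1) rf unfolding under_def refl_on_def by blast
  moreover have "(card_of S, natLeq) \<in> ordLeq"
  proof -
    have "(card_of S, card_of (UNIV::nat set)) \<in> ordLeq"
      using assms(2) unfolding countable_def card_of_ordLeq[symmetric] by auto
    then show ?thesis using card_of_nat ordLeq_ordIso_trans by blast
  qed
  ultimately obtain i where i: "i \<in> Field ?r" "S \<subseteq> under ?r i"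
    using cardSuc_UNION[OF natLeq_Card_order _ chain] Field_natLeq by (metis infinite_UNIV_nat)
  obtain b where b: "b \<in> Field ?r" "i \<noteq> b" "(i, b) \<in> ?r"
    using infinite_Card_order_limit[OF Cr inf i(1)] by blast
  show ?thesis
  proof (intro bexI[OF _ b(1)] ballI conjI)
    fix \<alpha> assume "\<alpha> \<in> S"
    then have \<alpha>i: "(\<alpha>, i) \<in> ?r" using i under_def by fastforce
    then show "(\<alpha>, b) \<in> ?r" using b tr by (auto elim: transE)
    show "\<alpha> \<noteq> b" using \<alpha>i b an by (auto simp: antisym_def)
  qed
qed

lemma type_I_space_countably_directed_open_cover:
  assumes "type_I_space X"
  shows "\<exists>(I :: nat set set) G. topspace X = (\<Union>\<alpha>\<in>I. G \<alpha>) \<and>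
    (\<forall>\<alpha>\<in>I. openin X (G \<alpha>) \<and> Lindelof_in X (X closure_of G \<alpha>)) \<and>
    countably_directed I G \<and> countably_directed I (\<lambda>\<alpha>. X closure_of G \<alpha>)"
proof -
  let ?I = "Field (cardSuc natLeq)"
  obtain G where "topspace X = (\<Union>\<alpha>\<in>?I. G \<alpha>) \<and>
    (\<forall>\<alpha>\<in>?I. openin X (G \<alpha>) \<and> Lindelof_in X (X closure_of G \<alpha>) \<and> topspace X \<noteq> G \<alpha>) \<and>
    (\<forall>\<alpha>\<in>?I. \<forall>\<beta>\<in>?I. (\<alpha>, \<beta>) \<in> cardSuc natLeq \<and> \<alpha> \<noteq> \<beta> \<longrightarrow> X closure_of G \<alpha> \<subseteq> G \<beta>)"
    using assms unfolding type_I_space_def by (rule exE)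
  then have G: "topspace X = (\<Union>\<alpha>\<in>?I. G \<alpha>)"
      "\<forall>\<alpha>\<in>?I. openin X (G \<alpha>) \<and> Lindelof_in X (X closure_of G \<alpha>)"
    and below: "\<forall>\<alpha>\<in>?I. \<forall>\<beta>\<in>?I. (\<alpha>, \<beta>) \<in> cardSuc natLeq \<and> \<alpha> \<noteq> \<beta> \<longrightarrow> X closure_of G \<alpha> \<subseteq> G \<beta>"
    by simp_all
  have G_closure: "G \<alpha> \<subseteq> X closure_of G \<alpha>" if "\<alpha> \<in> ?I" for \<alpha>
    using G(2) that by (simp add: closure_of_subset openin_subset)
  have bound: "\<exists>\<delta>\<in>?I. \<forall>\<alpha>\<in>J. X closure_of G \<alpha> \<subseteq> G \<delta>" if J: "J \<subseteq> ?I" "countable J" for J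
  proof -
    obtain \<delta> where "\<delta> \<in> ?I" "\<forall>\<alpha>\<in>J. (\<alpha>, \<delta>) \<in> cardSuc natLeq \<and> \<alpha> \<noteq> \<delta>"
      using cardSuc_natLeq_countable_strict_bound[OF J] by blast
    with J(1) below show ?thesis by blast
  qed
  show ?thesis
  proof (intro exI[of _ ?I] exI[of _ G] conjI)
    show "topspace X = (\<Union>\<alpha>\<in>?I. G \<alpha>)" by (fact G(1))
    show "\<forall>\<alpha>\<in>?I. openin X (G \<alpha>) \<and> Lindelof_in X (X closure_of G \<alpha>)" by (fact G(2))
    show "countably_directed ?I G"
      unfolding countably_directed_def
    proof (intro allI impI)
      fix J assume J: "J \<subseteq> ?I" "countable J"
      then obtain \<delta> where "\<delta> \<in> ?I" "\<forall>\<alpha>\<in>J. X closure_of G \<alpha> \<subseteq> G \<delta>" using bound by blast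
      then show "\<exists>\<delta>\<in>?I. \<forall>\<alpha>\<in>J. G \<alpha> \<subseteq> G \<delta>" using G_closure J(1) by blast
    qed
    show "countably_directed ?I (\<lambda>\<alpha>. X closure_of G \<alpha>)"
      unfolding countably_directed_def
    proof (intro allI impI)
      fix J assume "J \<subseteq> ?I" "countable J"
      then obtain \<delta> where "\<delta> \<in> ?I" "\<forall>\<alpha>\<in>J. X closure_of G \<alpha> \<subseteq> G \<delta>" using bound by blast
      then show "\<exists>\<delta>\<in>?I. \<forall>\<alpha>\<in>J. X closure_of G \<alpha> \<subseteq> X closure_of G \<delta>"
        using G_closure by blast
    qed
  qed
qed

lemma L_cl_prop_if_strict_compact_chain:
  assumes X: "Hausdorff_space X" and Y: "Hausdorff_space Y" "metrizable_space Y"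
    and r: "Card_order r" and chain: "strict_chain r X (compactin X)"
  shows "L_cl_prop X Y"
  using r chain
proof (cases rule: strict_chain_cases)
  case (directed H)
  show ?thesis
    unfolding L_cl_prop_def
  proof (intro disjI2 allI impI)
    fix f assume f: "continuous_map X Y f"
    have fH: "compactin Y (f ` H \<alpha>)" if "\<alpha> \<in> Field r" for \<alpha>
      using image_compactin directed(2)[OF that] f by blast
    have "countably_directed (Field r) (\<lambda>\<alpha>. f ` H \<alpha>)"
      using directed(3) by (rule countably_directed_mono_comp) (simp add: mono_def image_mono)
    with fH have "compactin Y (\<Union>\<alpha>\<in>Field r. f ` H \<alpha>)"
      by (rule metrizable_compactin_countably_directed_Union[OF Y(2)])
    then have "compactin Y (f ` topspace X)" by (simp add: directed(1) image_UN)
    then have "\<exists>\<beta>\<in>Field r. f ` H \<beta> = f ` topspace X"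
      by (rule countably_directed_cover_image_attained[OF Y _ directed(1) fH directed(3)])
    then obtain \<beta> where "\<beta> \<in> Field r" "f ` H \<beta> = f ` topspace X" by blast
    moreover have "Lindelof_in X (H \<beta>)" "closedin X (H \<beta>)"
      using directed(2)[OF \<open>\<beta> \<in> Field r\<close>] X
      by (simp_all add: compactin_imp_Lindelof_in compactin_imp_closedin)
    ultimately show "\<exists>Z. Lindelof_in X Z \<and> closedin X Z \<and> f ` Z = f ` topspace X" by blast
  qed
next
  case (countable \<H>)
  then have "Lindelof_space X"
    by (intro Lindelof_space_countable_Union_Lindelof_in[of \<H>])
      (simp_all add: compactin_imp_Lindelof_in)
  then show ?thesis by (simp add: L_cl_prop_def)
qed

lemma BR_prop_if_strict_open_chain:
  assumes Y: "Hausdorff_space Y" "metrizable_space Y"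
    and r: "Card_order r" and X: "countably_compact_space X"
    and chain: "strict_chain r X (\<lambda>H. openin X H \<and> (\<exists>L. Lindelof_in X L \<and> H \<subseteq> L))"
  shows "BR_prop X Y"
  using r chain
proof (cases rule: strict_chain_cases)
  case (directed H)
  show ?thesis
    unfolding BR_prop_def
  proof (intro disjI2 allI impI)
    fix f assume f: "continuous_map X Y f"
    have H_open: "openin X (H \<alpha>)" if "\<alpha> \<in> Field r" for \<alpha> using directed(2)[OF that] by blast
    obtain \<beta> where \<beta>: "\<beta> \<in> Field r" and stable: "\<forall>Z W. H \<beta> \<subseteq> Z \<and> Z \<subseteq> W \<and>
        Lindelof_in X W \<longrightarrow> f ` (topspace X - W) = f ` (topspace X - Z)"
      using BR_witness_countably_directed_open_cover[OF Y X f directed(1) H_open directed(3)]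
      by blast
    obtain L where L: "Lindelof_in X L" "H \<beta> \<subseteq> L" using directed(2)[OF \<beta>] by blast
    show "\<exists>Z. Lindelof_in X Z \<and> (\<forall>W. Lindelof_in X W \<and> Z \<subseteq> W \<longrightarrow>
        f ` (topspace X - W) = f ` (topspace X - Z))"
    proof (intro exI[of _ L] conjI allI impI)
      fix W assume "Lindelof_in X W \<and> L \<subseteq> W"
      then show "f ` (topspace X - W) = f ` (topspace X - L)"
        using stable[rule_format, of L W] L(2) by blast
    qed (fact L(1))
  qed
next
  case (countable \<H>)
  then have "\<forall>H\<in>\<H>. \<exists>L. Lindelof_in X L \<and> H \<subseteq> L" by blast
  from bchoice[OF this] obtain L where L: "\<forall>H\<in>\<H>. Lindelof_in X (L H) \<and> H \<subseteq> L H" ..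
  have "Lindelof_space X"
  proof (rule Lindelof_space_countable_Union_Lindelof_in[of "L ` \<H>"])
    show "countable (L ` \<H>)" using countable(1) by simp
    show "Lindelof_in X M" if "M \<in> L ` \<H>" for M using L that by blast
    show "topspace X \<subseteq> \<Union>(L ` \<H>)" using L countable(3) by blast
  qed
  then show ?thesis by (simp add: BR_prop_def)
qed

lemma BR_cl_prop_and_L_cl_prop_if_type_I:
  assumes Y: "Hausdorff_space Y" "metrizable_space Y"
    and X: "countably_compact_space X" "type_I_space X"
  shows "BR_cl_prop X Y \<and> L_cl_prop X Y"
proof -
  obtain I :: "nat set set" and G where G: "topspace X = (\<Union>\<alpha>\<in>I. G \<alpha>)"
    "\<forall>\<alpha>\<in>I. openin X (G \<alpha>) \<and> Lindelof_in X (X closure_of G \<alpha>)"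
    "countably_directed I G" "countably_directed I (\<lambda>\<alpha>. X closure_of G \<alpha>)"
    using type_I_space_countably_directed_open_cover[OF X(2)] by blast
  have G_open: "openin X (G \<alpha>)" and G_Lindelof: "Lindelof_in X (X closure_of G \<alpha>)"
    if "\<alpha> \<in> I" for \<alpha>
    using G(2) that by auto
  have G_closure: "G \<alpha> \<subseteq> X closure_of G \<alpha>" if "\<alpha> \<in> I" for \<alpha>
    using G_open[OF that] by (simp add: closure_of_subset openin_subset)
  have "BR_cl_prop X Y"
    unfolding BR_cl_prop_def
  proof (intro disjI2 allI impI)
    fix f assume f: "continuous_map X Y f"
    obtain \<beta> where \<beta>: "\<beta> \<in> I" and stable: "\<forall>Z W. G \<beta> \<subseteq> Z \<and> Z \<subseteq> W \<and>
        Lindelof_in X W \<longrightarrow> f ` (topspace X - W) = f ` (topspace X - Z)"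
      using BR_witness_countably_directed_open_cover[OF Y X(1) f G(1) G_open G(3)] by blast
    show "\<exists>Z. Lindelof_in X Z \<and> closedin X Z \<and> (\<forall>W. Lindelof_in X W \<and> Z \<subseteq> W \<longrightarrow>
        f ` (topspace X - W) = f ` (topspace X - Z))"
    proof (intro exI[of _ "X closure_of G \<beta>"] conjI allI impI)
      fix W assume "Lindelof_in X W \<and> X closure_of G \<beta> \<subseteq> W"
      then show "f ` (topspace X - W) = f ` (topspace X - X closure_of G \<beta>)"
        using stable[rule_format, of "X closure_of G \<beta>" W] G_closure[OF \<beta>] by blast
    qed (simp_all add: G_Lindelof[OF \<beta>])
  qed
  moreover have "L_cl_prop X Y"
    unfolding L_cl_prop_def
  proof (intro disjI2 allI impI)
    fix f assume f: "continuous_map X Y f"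
    have cover: "topspace X = (\<Union>\<alpha>\<in>I. X closure_of G \<alpha>)"
      using G(1) G_closure closure_of_subset_topspace by fastforce
    have fX: "compactin Y (f ` topspace X)"
      by (rule countably_compact_space_closedin_image_compactin[OF X(1) closedin_topspace f Y(2)])
    have f_closure: "compactin Y (f ` (X closure_of G \<alpha>))" for \<alpha>
      by (rule countably_compact_space_closedin_image_compactin[OF X(1) closedin_closure_of f Y(2)])
    have "\<exists>\<beta>\<in>I. f ` (X closure_of G \<beta>) = f ` topspace X"
      by (rule countably_directed_cover_image_attained[OF Y fX cover f_closure G(4)])
    then obtain \<beta> where "\<beta> \<in> I" "f ` (X closure_of G \<beta>) = f ` topspace X" by blast
    then show "\<exists>Z. Lindelof_in X Z \<and> closedin X Z \<and> f ` Z = f ` topspace X"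
      using G_Lindelof closedin_closure_of by blast
  qed
  ultimately show ?thesis ..
qed

theorem theorem5p8:
  fixes X :: "'a topology" and Y :: "'b topology" and r :: "'i rel"
  assumes "Hausdorff_space X" and "Hausdorff_space Y" and "metrizable_space Y"
    and "Card_order r" and "infinite (Field r)"
  shows "(strict_chain r X (compactin X) \<longrightarrow> L_cl_prop X Y) \<and>
         (countably_compact_space X \<and>
          strict_chain r X (\<lambda>H. openin X H \<and> (\<exists>L. Lindelof_in X L \<and> H \<subseteq> L))
            \<longrightarrow> BR_prop X Y) \<and>
         (countably_compact_space X \<and> type_I_space X \<longrightarrow> BR_cl_prop X Y \<and> L_cl_prop X Y)"
  using L_cl_prop_if_strict_compact_chain[OF assms(1-4)]
    BR_prop_if_strict_open_chain[OF assms(2-4)]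
    BR_cl_prop_and_L_cl_prop_if_type_I[OF assms(2,3)]
  by blast

end
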